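(* Let $S=\{(x_1,x_2)\in\mathbb{R}^2:x_1^4-x_1^2x_2+x_2^3=0\}$, $\tilde S^{o}=\{(x_0,x_1,x_2):x_1^4-x_0x_1^2x_2+x_0x_2^3=0,\ x_0>0\}$ and $\tilde S^{c}$ the same set with $x_0\ge0$. Then the linear form $X_0-X_2$ is positive on $\mathrm{conv}(\overline{\tilde S^{o}})\setminus\{0\}$, so $\mathrm{conv}(\overline{\tilde S^{o}})$ is closed and pointed, and $S$ is not closed at $\infty$, i.e. $\overline{\tilde S^{o}}\neq\tilde S^{c}$.
   Context: A closed convex cone $K$ is pointed if $K\cap(-K)=\{0\}$. $S$ is closed at $\infty$ if $\overline{\tilde S^{o}}=\tilde S^{c}$. Overline denotes closure, $\mathrm{conv}$ convex hull. *)

theory Defs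
  imports "HOL-Analysis.Analysis"
begin

definition S :: "(real \<times> real) set" where
  "S = {(x1, x2). x1^4 - x1^2 * x2 + x2^3 = 0}"

definition S_tilde_o :: "(real \<times> real \<times> real) set" where
  "S_tilde_o = {(x0, x1, x2). x1^4 - x0 * x1^2 * x2 + x0 * x2^3 = 0 \<and> x0 > 0}"

definition S_tilde_c :: "(real \<times> real \<times> real) set" where
  "S_tilde_c = {(x0, x1, x2). x1^4 - x0 * x1^2 * x2 + x0 * x2^3 = 0 \<and> x0 \<ge> 0}"

definition closed_at_infinity :: "bool" where
  "closed_at_infinity \<longleftrightarrow> closure S_tilde_o = S_tilde_c"

definition pointed :: "'a::real_vector set \<Rightarrow> bool" where
  "pointed K \<longleftrightarrow> K \<inter> uminus ` K = {0}"

end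

theory Submission
  imports Defs
begin

text \<open>The identity \<open>(2 x\<^sub>1\<^sup>2 - x\<^sub>0 x\<^sub>2)\<^sup>2 = 4 F + x\<^sub>0 x\<^sub>2\<^sup>2 (x\<^sub>0 - 4 x\<^sub>2)\<close>, with \<open>F\<close> the defining
  polynomial, shows \<open>4 x\<^sub>2 \<le> x\<^sub>0\<close> on \<open>S_tilde_o\<close>, hence on its closure. So the closure misses the point
  \<open>(0, 0, 1)\<close> of \<open>S_tilde_c\<close>, and the only point of the closure with \<open>x\<^sub>0 \<le> x\<^sub>2\<close> is the origin. A linear
  form positive on a closed cone away from the origin is positive on its convex hull, makes the
  hull pointed, and cuts the cone in a compact base, whose conic hull is the (closed) convex hull.\<close>

lemma convex_hull_linear_pos:
  fixes l :: "'a::real_vector \<Rightarrow> real"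
  assumes "linear l" "\<And>x. x \<in> K \<Longrightarrow> x \<noteq> 0 \<Longrightarrow> 0 < l x"
    and "x \<in> convex hull K" "x \<noteq> 0"
  shows "0 < l x"
proof -
  have "convex (insert 0 {x. 0 < l x})"
  proof (rule convexI)
    fix a b and u v :: real assume ab: "a \<in> insert 0 {x. 0 < l x}" "b \<in> insert 0 {x. 0 < l x}"
      and uv: "0 \<le> u" "0 \<le> v" "u + v = 1"
    have "0 \<le> l a" "0 \<le> l b" using ab linear_0[OF assms(1)] by auto
    then have "0 \<le> u * l a + v * l b" using uv by simp
    moreover have "l (u *\<^sub>R a + v *\<^sub>R b) = u * l a + v * l b"
      using assms(1) by (simp add: linear_add linear_scale)
    moreover have "u *\<^sub>R a + v *\<^sub>R b = 0" if "u * l a + v * l b = 0"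
      using that ab uv linear_0[OF assms(1)] by (auto simp: add_nonneg_eq_0_iff mult_le_0_iff)
    ultimately show "u *\<^sub>R a + v *\<^sub>R b \<in> insert 0 {x. 0 < l x}"
      by (cases "u * l a + v * l b = 0") auto
  qed
  moreover have "K \<subseteq> insert 0 {x. 0 < l x}" using assms(2) by auto
  ultimately show ?thesis using assms(3,4) hull_minimal[of K _ convex] by blast
qed

lemma pointed_if_linear_pos:
  fixes l :: "'a::real_vector \<Rightarrow> real"
  assumes "0 \<in> C" "linear l" "\<And>x. x \<in> C \<Longrightarrow> x \<noteq> 0 \<Longrightarrow> 0 < l x"
  shows "pointed C"
proof -
  have "x = 0" if "x \<in> C" "- x \<in> C" for x
  proof (rule ccontr)
    assume "x \<noteq> 0"
    then have "0 < l x" "0 < l (- x)" using assms(3) that by auto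
    then show False using linear_neg[OF assms(2), of x] by simp
  qed
  then show ?thesis unfolding pointed_def using assms(1) by force
qed

lemma cone_linear_pos_norm_bound:
  fixes K :: "'a::euclidean_space set" and l :: "'a \<Rightarrow> real"
  assumes "closed K" "cone K" "linear l" "\<And>x. x \<in> K \<Longrightarrow> x \<noteq> 0 \<Longrightarrow> 0 < l x"
  obtains m where "0 < m" "\<And>x. x \<in> K \<Longrightarrow> m * norm x \<le> l x"
proof -
  have unit: "(1 / norm x) *\<^sub>R x \<in> K \<inter> sphere 0 1" if "x \<in> K" "x \<noteq> 0" for x
    using that assms(2) by (simp add: cone_def)
  have scale: "l ((1 / norm x) *\<^sub>R x) = l x / norm x" for x
    using linear_scale[OF assms(3)] by simp
  show ?thesis
  proof (cases "K \<inter> sphere 0 1 = {}")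
    case True
    then have "x = 0" if "x \<in> K" for x using unit that by blast
    then show ?thesis using that[of 1] linear_0[OF assms(3)] by fastforce
  next
    case False
    have "continuous_on (K \<inter> sphere 0 1) l"
      using assms(3) by (simp add: linear_continuous_on linear_conv_bounded_linear)
    then obtain z where z: "z \<in> K \<inter> sphere 0 1" and min: "\<And>y. y \<in> K \<inter> sphere 0 1 \<Longrightarrow> l z \<le> l y"
      using continuous_attains_inf[OF closed_Int_compact[OF assms(1) compact_sphere] False] by blast
    have "l z * norm x \<le> l x" if "x \<in> K" for x
    proof (cases "x = 0")
      case False
      then have "l z \<le> l x / norm x" using min[OF unit[OF that]] scale by simp
      then show ?thesis using False by (simp add: field_simps)
    qed (simp add: linear_0[OF assms(3)])
    moreover have "0 < l z" using z assms(4)[of z] by force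
    ultimately show ?thesis using that by blast
  qed
qed

lemma closed_convex_hull_cone:
  fixes K :: "'a::euclidean_space set" and l :: "'a \<Rightarrow> real"
  assumes "closed K" "cone K" "linear l" "\<And>x. x \<in> K \<Longrightarrow> x \<noteq> 0 \<Longrightarrow> 0 < l x"
  shows "closed (convex hull K)"
proof (cases "K \<subseteq> {0}")
  case True
  then have "convex hull K \<subseteq> {0}" using hull_mono[OF True, of convex] by simp
  then show ?thesis using finite_subset finite_imp_closed by blast
next
  case False
  then obtain z where z: "z \<in> K" "z \<noteq> 0" by blast
  obtain m where m: "0 < m" "\<And>x. x \<in> K \<Longrightarrow> m * norm x \<le> l x"
    using cone_linear_pos_norm_bound[OF assms] by blast
  define B where "B = K \<inter> l -` {1}"
  have normalize: "(1 / l x) *\<^sub>R x \<in> B" if "x \<in> K" "x \<noteq> 0" for x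
    using that assms(2) assms(4)[OF that] linear_scale[OF assms(3)] by (simp add: B_def cone_def)
  have "norm x \<le> 1 / m" if "x \<in> B" for x
    using m(2)[of x] that m(1) by (auto simp: B_def field_simps)
  then have "bounded B" by (rule boundedI)
  moreover have "closed B"
    unfolding B_def using assms(1,3)
    by (intro continuous_closed_preimage) (simp_all add: linear_continuous_on linear_conv_bounded_linear)
  ultimately have "compact (convex hull B)" using compact_convex_hull compact_eq_bounded_closed by blast
  moreover have "convex hull B \<subseteq> l -` {1}"
    by (intro hull_minimal convex_linear_vimage[OF assms(3)]) (auto simp: B_def)
  then have "0 \<notin> convex hull B" using linear_0[OF assms(3)] by auto
  moreover have "convex hull K = conic hull (convex hull B)"
  proof
    have "x \<in> conic hull (convex hull B)" if "x \<in> K" for x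
    proof (cases "x = 0")
      case True
      then show ?thesis using normalize[OF z] by auto
    next
      case False
      have "x = l x *\<^sub>R ((1 / l x) *\<^sub>R x)" using assms(4)[OF that False] by simp
      then show ?thesis using normalize[OF that False] assms(4)[OF that False]
        by (metis conic_conic_hull conic_mul hull_inc less_imp_le)
    qed
    then show "convex hull K \<subseteq> conic hull (convex hull B)"
      by (intro hull_minimal convex_conic_hull convex_convex_hull) auto
    show "conic hull (convex hull B) \<subseteq> convex hull K"
      using cone_convex_hull[OF assms(2)]
      by (intro hull_minimal hull_mono) (auto simp: B_def cone_def conic_def)
  qed
  ultimately show ?thesis using closed_conic_hull by metis
qed

lemma S_tilde_o_x2_le:
  fixes x0 x1 x2 :: real
  assumes "0 < x0" "x1^4 - x0 * x1^2 * x2 + x0 * x2^3 = 0"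
  shows "4 * x2 \<le> x0"
proof (cases "x2 \<le> 0")
  case False
  have "(2 * x1^2 - x0 * x2)^2 = 4 * (x1^4 - x0 * x1^2 * x2 + x0 * x2^3) + x0 * x2^2 * (x0 - 4 * x2)"
    by (simp add: algebra_simps power2_eq_square power4_eq_xxxx power3_eq_cube)
  then have "0 \<le> x0 * x2^2 * (x0 - 4 * x2)" using assms(2) by (metis add_0 mult_zero_right zero_le_power2)
  moreover have "0 < x0 * x2^2" using False assms(1) by simp
  ultimately show ?thesis by (simp add: zero_le_mult_iff)
qed (use assms in linarith)

lemma closure_S_tilde_o_bounds:
  assumes "(x0, x1, x2) \<in> closure S_tilde_o"
  shows "0 \<le> x0" "4 * x2 \<le> x0" "x1^4 - x0 * x1^2 * x2 + x0 * x2^3 = 0"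
proof -
  define C :: "(real \<times> real \<times> real) set" where
    "C = {p. 0 \<le> fst p} \<inter> {p. 4 * snd (snd p) \<le> fst p} \<inter>
         {p. (fst (snd p))^4 - fst p * (fst (snd p))^2 * snd (snd p) + fst p * (snd (snd p))^3 = 0}"
  have "closed C"
    unfolding C_def by (intro closed_Int closed_Collect_le closed_Collect_eq continuous_intros)
  moreover have "S_tilde_o \<subseteq> C" using S_tilde_o_x2_le by (auto simp: S_tilde_o_def C_def)
  ultimately have "closure S_tilde_o \<subseteq> C" by (rule closure_minimal[rotated])
  then show "0 \<le> x0" "4 * x2 \<le> x0" "x1^4 - x0 * x1^2 * x2 + x0 * x2^3 = 0"
    using assms by (auto simp: C_def)
qed

lemma zero_in_closure_S_tilde_o: "0 \<in> closure S_tilde_o"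
proof -
  have "(\<lambda>n. (1 / Suc n, 0, 0)) \<longlonglongrightarrow> (0 :: real \<times> real \<times> real)"
    using LIMSEQ_inverse_real_of_nat by (simp add: zero_prod_def tendsto_Pair inverse_eq_divide)
  moreover have "(1 / Suc n, 0, 0) \<in> S_tilde_o" for n by (simp add: S_tilde_o_def)
  ultimately show ?thesis by (meson closure_sequential)
qed

lemma cone_closure_S_tilde_o: "cone (closure S_tilde_o)"
proof -
  have "cone (insert 0 S_tilde_o)"
    unfolding cone_def
  proof (intro ballI allI impI)
    fix p :: "real \<times> real \<times> real" and t :: real
    assume "p \<in> insert 0 S_tilde_o" "0 \<le> t"
    moreover obtain a b c where p: "p = (a, b, c)" by (cases p)
    moreover have "(t*b)^4 - (t*a) * (t*b)^2 * (t*c) + (t*a) * (t*c)^3 = t^4 * (b^4 - a * b^2 * c + a * c^3)"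
      by (simp add: algebra_simps power2_eq_square power4_eq_xxxx power3_eq_cube)
    ultimately show "t *\<^sub>R p \<in> insert 0 S_tilde_o"
      by (cases "t = 0") (auto simp: S_tilde_o_def zero_prod_def)
  qed
  then have "cone (closure (insert 0 S_tilde_o))" by (rule cone_closure)
  then show ?thesis using zero_in_closure_S_tilde_o by (simp add: closure_insert insert_absorb)
qed

lemma closure_S_tilde_o_x0_gt_x2:
  assumes "(x0, x1, x2) \<in> closure S_tilde_o" "(x0, x1, x2) \<noteq> 0"
  shows "x2 < x0"
proof (rule ccontr)
  assume "\<not> x2 < x0"
  then have "x0 = 0" "x2 = 0" using closure_S_tilde_o_bounds(1,2)[OF assms(1)] by linarith+
  then have "x1 = 0" using closure_S_tilde_o_bounds(3)[OF assms(1)] by simp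
  then show False using assms(2) \<open>x0 = 0\<close> \<open>x2 = 0\<close> by (simp add: zero_prod_def)
qed

lemma not_closed_at_infinity: "\<not> closed_at_infinity"
proof
  assume "closed_at_infinity"
  then have "(0, 0, 1) \<in> closure S_tilde_o" by (simp add: closed_at_infinity_def S_tilde_c_def)
  then show False using closure_S_tilde_o_bounds(2) by fastforce
qed

theorem mainTheorem20:
  shows "(\<forall>x0 x1 x2. (x0, x1, x2) \<in> convex hull (closure S_tilde_o) - {0} \<longrightarrow> x0 - x2 > 0)
     \<and> cone (convex hull (closure S_tilde_o))
     \<and> closed (convex hull (closure S_tilde_o))
     \<and> pointed (convex hull (closure S_tilde_o))
     \<and> \<not> closed_at_infinity"
proof -
  define l :: "real \<times> real \<times> real \<Rightarrow> real" where "l p = fst p - snd (snd p)" for p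
  have lin: "linear l" unfolding l_def by (intro linearI) (auto simp: algebra_simps)
  have pos: "0 < l p" if "p \<in> closure S_tilde_o" "p \<noteq> 0" for p
    using that closure_S_tilde_o_x0_gt_x2 by (cases p) (auto simp: l_def)
  have hull_pos: "0 < l p" if "p \<in> convex hull (closure S_tilde_o)" "p \<noteq> 0" for p
    using convex_hull_linear_pos[OF lin pos that] .
  have "0 \<in> convex hull (closure S_tilde_o)" by (rule hull_inc[OF zero_in_closure_S_tilde_o])
  then show ?thesis
    using hull_pos[unfolded l_def] cone_convex_hull[OF cone_closure_S_tilde_o]
      closed_convex_hull_cone[OF closed_closure cone_closure_S_tilde_o lin pos]
      pointed_if_linear_pos[OF _ lin hull_pos] not_closed_at_infinity
    by fastforce
qed

end
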